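(* Let $B$ be an $n\times n$ skew-symmetrizable matrix, $\mathbf d$ positive integers, $D=\mathrm{diag}(d_1,\dots,d_n)$. For every vertex $t$ of $\mathbb T_n$, the $G$-matrix $G^t$ of the $(\mathbf d,\mathbf z)$-cluster pattern with principal coefficients and initial seed $(\mathbf x,\mathbf y,B)$ coincides with the $G$-matrix at $t$ of the ordinary cluster pattern with principal coefficients and initial seed $(\mathbf x,\mathbf y,BD)$.
   Context: All matrices are integer, $[a]_+=\max(a,0)$; $BD$ is skew-symmetrizable. A semifield is an abelian multiplicative group with a commutative associative $\oplus$ over which multiplication distributes; $\mathcal F=\mathbb Q\mathbb P(w_1,\dots,w_n)$. Mutation data: positive integers $\mathbf d$ and $z_{i,s}$ ($1\le s\le d_i-1$) with $z_{i,s}=z_{i,d_i-s}$, $z_{i,0}=z_{i,d_i}=1$. The $(\mathbf d,\mathbf z)$-mutation $\mu_k(\mathbf{x},\mathbf{y},B)=(\mathbf{x}',\mathbf{y}',B')$ of a seed (skew-symmetrizable $B=(b_{ij})$, $\mathbf x\in\mathcal F^n$, $\mathbf y\in\mathbb P^n$): $b'_{ij}=-b_{ij}$ if $i=k$ or $j=k$, else $b'_{ij}=b_{ij}+d_k([-b_{ik}]_+b_{kj}+b_{ik}[b_{kj}]_+)$; $y'_k=y_k^{-1}$, $y'_i=y_i(y_k^{[\varepsilon b_{ki}]_+})^{d_k}(\bigoplus_{s=0}^{d_k}z_{k,s}y_k^{\varepsilon s})^{-b_{ki}}$ ($i\ne k$); $x'_i=x_i$ ($i\ne k$), $x'_k=x_k^{-1}(\prod_jx_j^{[-\varepsilon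 b_{jk}]_+})^{d_k}\frac{\sum_{s=0}^{d_k}z_{k,s}\hat y_k^{\varepsilon s}}{\bigoplus_{s=0}^{d_k}z_{k,s}y_k^{\varepsilon s}}$, $\hat y_i=y_i\prod_jx_j^{b_{ji}}$, $\varepsilon=\pm1$. $\mathbb T_n$ is the $n$-regular tree with edges labeled $1,\dots,n$, distinct labels at each vertex; a cluster pattern assigns seeds to vertices related by $\mu_k$ along edges labeled $k$, initial seed at fixed $t_0$. Principal coefficients: $\mathrm{Trop}(\mathbf y,\mathbf z)$ is the free abelian group generated by formal $y_1,\dots,y_n$, $z_{i,s}$ ($z_{i,s}=z_{i,d_i-s}$), with $\oplus$ the componentwise minimum of exponents; the pattern with principal coefficients lives in it with initial seed $(\mathbf x,\mathbf y,B)$. Each $x^t_i$ equals an $X$-function $X^t_i\in\mathbb Z[x_1^{\pm1},\dots,x_n^{\pm1},\mathbf y,\mathbf z]$, homogeneous for the grading $\deg x_i=\mathbf e_i$, $\deg y_j=-\sum_ib_{ij}\mathbf e_i$ ($B$ the initial matrix), $\deg z_{i,s}=0$; $\deg X^t_j=\sum_ig^t_{ij}\mathbf e_i$ defines $G^t=(g^t_{ij})$. The ordinary cluster pattern with principal coefficients is the special case $\mathbf d=(1,\dots,1)$ (no $\mathbf z$), with $G$-matrices defined the same way (using its own initial matrix for the grading). *)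

theory Defs
  imports Complex_Main
begin

text \<open>Indices are 0..<n (the paper uses 1..n).  Integer matrices are nat \<Rightarrow> nat \<Rightarrow> int,
only entries with indices < n matter.\<close>

definition pos :: "int \<Rightarrow> int" where "pos a = max a 0"

definition skew_symmetrizable :: "nat \<Rightarrow> (nat \<Rightarrow> nat \<Rightarrow> int) \<Rightarrow> bool" where
  "skew_symmetrizable n B \<longleftrightarrow>
     (\<exists>r::nat \<Rightarrow> int. (\<forall>i<n. r i > 0) \<and> (\<forall>i<n. \<forall>j<n. r i * B i j = - (r j * B j i)))"

text \<open>Formal generators of the principal coefficient group Trop(y,z):
  Y j is y_j, Z i s is z_{i,s} for the canonical representative 1 \<le> s \<le> d_i/2
  (using z_{i,s} = z_{i,d_i-s}).  Elements of Trop(y,z) are integer exponent vectors.\<close>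
datatype var = Y nat | Z nat nat

type_synonym trop = "var \<Rightarrow> int"

text \<open>Exponent vector of z_{i,s}, with z_{i,0} = z_{i,d_i} = 1 and z_{i,s} = z_{i,d_i-s}.\<close>
definition zvec :: "(nat \<Rightarrow> nat) \<Rightarrow> nat \<Rightarrow> nat \<Rightarrow> trop" where
  "zvec d i s = (if s = 0 \<or> d i \<le> s then (\<lambda>_. 0)
                 else (\<lambda>v. if v = Z i (min s (d i - s)) then 1 else 0))"

definition yvec :: "nat \<Rightarrow> trop" where
  "yvec j = (\<lambda>v. if v = Y j then 1 else 0)"

definition gens :: "nat \<Rightarrow> (nat \<Rightarrow> nat) \<Rightarrow> var set" where
  "gens n d = Y ` {..<n} \<union> {Z i s | i s. i < n \<and> 1 \<le> s \<and> 2 * s \<le> d i}"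

definition mono :: "nat \<Rightarrow> (nat \<Rightarrow> nat) \<Rightarrow> (var \<Rightarrow> real) \<Rightarrow> trop \<Rightarrow> real" where
  "mono n d w e = (\<Prod>v\<in>gens n d. w v powi e v)"

text \<open>Elements of the ambient field of rational functions in x, y, z are represented by their
  evaluation functions at positive real points (x-values, values of y and z).\<close>
type_synonym fn = "(nat \<Rightarrow> real) \<Rightarrow> (var \<Rightarrow> real) \<Rightarrow> real"

type_synonym seed = "(nat \<Rightarrow> fn) \<times> (nat \<Rightarrow> trop) \<times> (nat \<Rightarrow> nat \<Rightarrow> int)"

definition mutB :: "(nat \<Rightarrow> nat) \<Rightarrow> nat \<Rightarrow> (nat \<Rightarrow> nat \<Rightarrow> int) \<Rightarrow> (nat \<Rightarrow> nat \<Rightarrow> int)" where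
  "mutB d k B = (\<lambda>i j. if i = k \<or> j = k then - B i j
      else B i j + int (d k) * (pos (- B i k) * B k j + B i k * pos (B k j)))"

text \<open>Tropical sum (componentwise min) \<Oplus>_{s=0}^{d_k} z_{k,s} y_k^{\<epsilon> s}.\<close>
definition tsum :: "(nat \<Rightarrow> nat) \<Rightarrow> int \<Rightarrow> nat \<Rightarrow> trop \<Rightarrow> trop" where
  "tsum d eps k yk = (\<lambda>v. Min ((\<lambda>s. zvec d k s v + eps * int s * yk v) ` {0..d k}))"

definition mutY :: "(nat \<Rightarrow> nat) \<Rightarrow> int \<Rightarrow> nat \<Rightarrow> (nat \<Rightarrow> nat \<Rightarrow> int) \<Rightarrow> (nat \<Rightarrow> trop) \<Rightarrow> (nat \<Rightarrow> trop)" where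
  "mutY d eps k B y = (\<lambda>i. if i = k then (\<lambda>v. - y k v)
      else (\<lambda>v. y i v + int (d k) * pos (eps * B k i) * y k v - B k i * tsum d eps k (y k) v))"

definition mutX :: "nat \<Rightarrow> (nat \<Rightarrow> nat) \<Rightarrow> int \<Rightarrow> nat \<Rightarrow> (nat \<Rightarrow> nat \<Rightarrow> int)
                     \<Rightarrow> (nat \<Rightarrow> trop) \<Rightarrow> (nat \<Rightarrow> fn) \<Rightarrow> (nat \<Rightarrow> fn)" where
  "mutX n d eps k B y X = (\<lambda>i. if i \<noteq> k then X i else
     (\<lambda>x w. let yhat = mono n d w (y k) * (\<Prod>j<n. X j x w powi B j k) in
        X k x w powi (-1) * (\<Prod>j<n. X j x w powi pos (- eps * B j k)) ^ d k
        * (\<Sum>s = 0..d k. mono n d w (zvec d k s) * yhat powi (eps * int s))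
        / mono n d w (tsum d eps k (y k))))"

definition mut :: "nat \<Rightarrow> (nat \<Rightarrow> nat) \<Rightarrow> int \<Rightarrow> nat \<Rightarrow> seed \<Rightarrow> seed" where
  "mut n d eps k S = (case S of (X, y, B) \<Rightarrow> (mutX n d eps k B y X, mutY d eps k B y, mutB d k B))"

text \<open>Vertices of T_n: reduced words (no two adjacent equal labels) of labels < n,
  encoding the path from t_0.\<close>
definition vertex :: "nat \<Rightarrow> nat list \<Rightarrow> bool" where
  "vertex n ks \<longleftrightarrow> set ks \<subseteq> {..<n} \<and> (\<forall>i. Suc i < length ks \<longrightarrow> ks ! i \<noteq> ks ! Suc i)"

definition seed0 :: "(nat \<Rightarrow> nat \<Rightarrow> int) \<Rightarrow> seed" where
  "seed0 B = ((\<lambda>i x w. x i), yvec, B)"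

definition pattern :: "nat \<Rightarrow> (nat \<Rightarrow> nat) \<Rightarrow> (nat \<Rightarrow> nat \<Rightarrow> int) \<Rightarrow> nat list \<Rightarrow> seed" where
  "pattern n d B ks = foldl (\<lambda>S k. mut n d 1 k S) (seed0 B) ks"

definition Xfun :: "nat \<Rightarrow> (nat \<Rightarrow> nat) \<Rightarrow> (nat \<Rightarrow> nat \<Rightarrow> int) \<Rightarrow> nat list \<Rightarrow> nat \<Rightarrow> fn" where
  "Xfun n d B ks j = fst (pattern n d B ks) j"

text \<open>Torus action realising the Z^n-grading deg x_i = e_i, deg y_j = - \<Sum>_i b_ij e_i, deg z = 0.\<close>
definition scaleX :: "(nat \<Rightarrow> real) \<Rightarrow> (nat \<Rightarrow> real) \<Rightarrow> (nat \<Rightarrow> real)" where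
  "scaleX lam x = (\<lambda>i. lam i * x i)"

definition scaleW :: "nat \<Rightarrow> (nat \<Rightarrow> nat \<Rightarrow> int) \<Rightarrow> (nat \<Rightarrow> real) \<Rightarrow> (var \<Rightarrow> real) \<Rightarrow> (var \<Rightarrow> real)" where
  "scaleW n B lam w = (\<lambda>v. case v of
       Y j \<Rightarrow> w (Y j) * (\<Prod>i<n. lam i powi (- B i j))
     | Z i s \<Rightarrow> w (Z i s))"

definition is_deg :: "nat \<Rightarrow> (nat \<Rightarrow> nat \<Rightarrow> int) \<Rightarrow> fn \<Rightarrow> (nat \<Rightarrow> int) \<Rightarrow> bool" where
  "is_deg n B f g \<longleftrightarrow> (\<forall>i\<ge>n. g i = 0) \<and>
     (\<forall>x w lam. (\<forall>i<n. x i > 0) \<longrightarrow> (\<forall>v. w v > 0) \<longrightarrow> (\<forall>i<n. lam i > 0) \<longrightarrow>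
        f (scaleX lam x) (scaleW n B lam w) = (\<Prod>i<n. lam i powi g i) * f x w)"

definition Gmat :: "nat \<Rightarrow> (nat \<Rightarrow> nat) \<Rightarrow> (nat \<Rightarrow> nat \<Rightarrow> int) \<Rightarrow> nat list \<Rightarrow> nat \<Rightarrow> nat \<Rightarrow> int" where
  "Gmat n d B ks i j = (THE g. is_deg n B (Xfun n d B ks j) g) i"

definition matD :: "(nat \<Rightarrow> nat \<Rightarrow> int) \<Rightarrow> (nat \<Rightarrow> nat) \<Rightarrow> (nat \<Rightarrow> nat \<Rightarrow> int)" where
  "matD B d = (\<lambda>i j. B i j * int (d j))"

end

theory Submission
  imports Defs
begin

text \<open>Every cluster variable of a pattern with principal coefficients is a positive function that
is homogeneous for the torus action, so its degree, the g-vector, is well defined. Along a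
mutation sequence the g-vectors obey the recursion
  g'_k = - g_k + d_k \<Sum>_j [- b_jk]_+ g_j - d_k B [- c_k]_+ ,
which only needs that every yhat_k has degree 0; this linear condition is itself preserved by
mutation. For the (d, z)-pattern of B and the ordinary pattern of BD the exchange matrices and
c-matrices stay related by B' = B D and C' = D^-1 C D at every vertex, and under this
correspondence both recursions coincide term by term. Induction along the path gives equal
g-vectors, hence equal G-matrices.\<close>

lemma pos_mult_nonneg: "0 \<le> c \<Longrightarrow> pos (c * a) = c * pos a"
  by (simp add: pos_def max_mult_distrib_left)

lemma Min_multiples: "Min ((\<lambda>s. int s * c) ` {0..m}) = int m * min 0 c"
proof (rule Min_eqI)
  show "int m * min 0 c \<in> (\<lambda>s. int s * c) ` {0..m}"
    by (cases "0 \<le> c") (auto intro: image_eqI[where x=0] image_eqI[where x=m])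
qed (auto simp: min_def mult_right_mono_neg)

lemma power_int_sum: "(x::'a::field) \<noteq> 0 \<Longrightarrow> x powi (\<Sum>j\<in>A. f j) = (\<Prod>j\<in>A. x powi f j)"
  by (induction A rule: infinite_finite_induct) (simp_all add: power_int_add)

lemma prod_power_int_distrib: "(\<Prod>j\<in>A. f j :: 'a::field) powi c = (\<Prod>j\<in>A. f j powi c)"
  by (induction A rule: infinite_finite_induct) (simp_all add: power_int_mult_distrib)

lemma prod_power_int_add:
  "\<forall>i\<in>I. (x i :: 'a::linordered_field) > 0 \<Longrightarrow>
    (\<Prod>i\<in>I. x i powi (a i + b i)) = (\<Prod>i\<in>I. x i powi a i) * (\<Prod>i\<in>I. x i powi b i)"
  unfolding prod.distrib[symmetric] by (rule prod.cong) (auto intro!: power_int_add)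

lemma prod_power_int_diff:
  "\<forall>i\<in>I. (x i :: 'a::linordered_field) > 0 \<Longrightarrow>
    (\<Prod>i\<in>I. x i powi (a i - b i)) = (\<Prod>i\<in>I. x i powi a i) / (\<Prod>i\<in>I. x i powi b i)"
  unfolding prod_dividef[symmetric] by (rule prod.cong) (auto intro!: power_int_diff)

lemma prod_power_int_mult: "(\<Prod>i\<in>I. (x i :: 'a::field) powi (c * a i)) = (\<Prod>i\<in>I. x i powi a i) powi c"
  unfolding prod_power_int_distrib by (simp add: power_int_mult[symmetric] mult.commute)

lemma prod_power_int_sum:
  "\<forall>i\<in>I. (x i :: 'a::linordered_field) > 0 \<Longrightarrow>
    (\<Prod>i\<in>I. x i powi (\<Sum>j\<in>J. a j i)) = (\<Prod>j\<in>J. \<Prod>i\<in>I. x i powi a j i)"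
  by (subst prod.swap) (rule prod.cong, auto intro!: power_int_sum)

section \<open>Homogeneous functions\<close>

lemma is_deg_scale:
  "is_deg n B0 f a \<Longrightarrow> \<forall>i<n. x i > 0 \<Longrightarrow> \<forall>v. w v > 0 \<Longrightarrow> \<forall>i<n. lam i > 0 \<Longrightarrow>
    f (scaleX lam x) (scaleW n B0 lam w) = (\<Prod>i<n. lam i powi a i) * f x w"
  unfolding is_deg_def by blast

lemma is_deg_support: "is_deg n B0 f a \<Longrightarrow> n \<le> i \<Longrightarrow> a i = 0"
  unfolding is_deg_def by blast

lemma is_degI:
  assumes "\<And>i. n \<le> i \<Longrightarrow> a i = 0"
    and "\<And>x w lam. \<forall>i<n. x i > 0 \<Longrightarrow> \<forall>v. w v > 0 \<Longrightarrow> \<forall>i<n. lam i > 0 \<Longrightarrow>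
           f (scaleX lam x) (scaleW n B0 lam w) = (\<Prod>i<n. lam i powi a i) * f x w"
  shows "is_deg n B0 f a"
  using assms unfolding is_deg_def by blast

lemma is_deg_mult:
  assumes "is_deg n B0 f a" "is_deg n B0 g b"
  shows "is_deg n B0 (\<lambda>x w. f x w * g x w) (\<lambda>i. a i + b i)"
  by (rule is_degI)
    (simp_all add: assms[THEN is_deg_support] assms[THEN is_deg_scale] prod_power_int_add)

lemma is_deg_divide:
  assumes "is_deg n B0 f a" "is_deg n B0 g b"
  shows "is_deg n B0 (\<lambda>x w. f x w / g x w) (\<lambda>i. a i - b i)"
  by (rule is_degI)
    (simp_all add: assms[THEN is_deg_support] assms[THEN is_deg_scale] prod_power_int_diff)

lemma is_deg_power_int:
  assumes "is_deg n B0 f a"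
  shows "is_deg n B0 (\<lambda>x w. f x w powi c) (\<lambda>i. c * a i)"
  by (rule is_degI)
    (simp_all add: assms[THEN is_deg_support] assms[THEN is_deg_scale] prod_power_int_mult power_int_mult_distrib)

lemma is_deg_power:
  assumes "is_deg n B0 f a"
  shows "is_deg n B0 (\<lambda>x w. f x w ^ m) (\<lambda>i. int m * a i)"
  using is_deg_power_int[OF assms, of "int m"] by simp

lemma is_deg_prod:
  assumes "\<And>j. j \<in> J \<Longrightarrow> is_deg n B0 (f j) (a j)"
  shows "is_deg n B0 (\<lambda>x w. \<Prod>j\<in>J. f j x w) (\<lambda>i. \<Sum>j\<in>J. a j i)"
proof (rule is_degI)
  fix x lam :: "nat \<Rightarrow> real" and w :: "var \<Rightarrow> real"
  assume "\<forall>i<n. 0 < x i" "\<forall>v. 0 < w v" "\<forall>i<n. 0 < lam i"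
  then show "(\<Prod>j\<in>J. f j (scaleX lam x) (scaleW n B0 lam w)) =
      (\<Prod>i<n. lam i powi (\<Sum>j\<in>J. a j i)) * (\<Prod>j\<in>J. f j x w)"
    by (simp add: is_deg_scale[OF assms] prod_power_int_sum prod.distrib cong: prod.cong)
qed (simp add: is_deg_support[OF assms])

lemma is_deg_sum:
  assumes "J \<noteq> {}" and "\<And>j. j \<in> J \<Longrightarrow> is_deg n B0 (f j) a"
  shows "is_deg n B0 (\<lambda>x w. \<Sum>j\<in>J. f j x w) a"
proof (rule is_degI)
  fix x lam :: "nat \<Rightarrow> real" and w :: "var \<Rightarrow> real"
  assume "\<forall>i<n. 0 < x i" "\<forall>v. 0 < w v" "\<forall>i<n. 0 < lam i"
  then show "(\<Sum>j\<in>J. f j (scaleX lam x) (scaleW n B0 lam w)) =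
      (\<Prod>i<n. lam i powi a i) * (\<Sum>j\<in>J. f j x w)"
    by (simp add: is_deg_scale[OF assms(2)] sum_distrib_left cong: sum.cong)
qed (metis assms ex_in_conv is_deg_support)

lemma is_deg_coordinate: "j < n \<Longrightarrow> is_deg n B0 (\<lambda>x w. x j) (\<lambda>i. if i = j then 1 else 0)"
proof (rule is_degI)
  fix x lam :: "nat \<Rightarrow> real" and w :: "var \<Rightarrow> real"
  assume "j < n"
  have "(\<Prod>i<n. lam i powi (if i = j then 1 else 0)) = (\<Prod>i<n. if i = j then lam i else 1)"
    by (rule prod.cong) auto
  then show "scaleX lam x j = (\<Prod>i<n. lam i powi (if i = j then 1 else 0)) * x j"
    using \<open>j < n\<close> by (simp add: scaleX_def)
qed auto

lemma is_deg_var: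
  "is_deg n B0 (\<lambda>x w. w v) (case v of Y j \<Rightarrow> (\<lambda>i. if i < n then - B0 i j else 0) | Z _ _ \<Rightarrow> (\<lambda>_. 0))"
proof (cases v)
  case (Y j)
  have "(\<Prod>i<n. lam i powi (if i < n then - B0 i j else 0)) = (\<Prod>i<n. lam i powi - B0 i j)"
    for lam :: "nat \<Rightarrow> real"
    by (rule prod.cong) auto
  then show ?thesis
    using Y by (auto intro!: is_degI simp: scaleW_def)
qed (auto intro!: is_degI simp: scaleW_def)

definition ydeg :: "nat \<Rightarrow> (nat \<Rightarrow> nat \<Rightarrow> int) \<Rightarrow> trop \<Rightarrow> nat \<Rightarrow> int" where
  "ydeg n B0 e = (\<lambda>i. if i < n then - (\<Sum>j<n. B0 i j * e (Y j)) else 0)"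

lemma finite_gens: "finite (gens n d)"
proof -
  have "{Z i s | i s. i < n \<and> 1 \<le> s \<and> 2 * s \<le> d i} \<subseteq> (\<lambda>(i, s). Z i s) ` (SIGMA i:{..<n}. {..d i})"
    by auto
  then have "finite {Z i s | i s. i < n \<and> 1 \<le> s \<and> 2 * s \<le> d i}"
    by (rule finite_subset) auto
  then show ?thesis
    unfolding gens_def by simp
qed

lemma is_deg_mono: "is_deg n B0 (\<lambda>x w. mono n d w e) (ydeg n B0 e)"
proof -
  define a where "a v = (case v of Y j \<Rightarrow> (\<lambda>i. if i < n then - B0 i j else 0) | Z _ _ \<Rightarrow> (\<lambda>_. 0))" for v
  have "is_deg n B0 (\<lambda>x w. \<Prod>v\<in>gens n d. w v powi e v) (\<lambda>i. \<Sum>v\<in>gens n d. e v * a v i)"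
    unfolding a_def by (intro is_deg_prod is_deg_power_int is_deg_var)
  moreover have "(\<Sum>v\<in>gens n d. e v * a v i) = ydeg n B0 e i" for i
  proof -
    have "(\<Sum>v\<in>gens n d. e v * a v i) = (\<Sum>v\<in>Y ` {..<n}. e v * a v i)"
      by (rule sum.mono_neutral_right[OF finite_gens]) (auto simp: gens_def a_def)
    also have "\<dots> = ydeg n B0 e i"
      by (simp add: sum.reindex inj_on_def a_def ydeg_def sum_negf mult.commute)
    finally show ?thesis .
  qed
  ultimately show ?thesis
    unfolding mono_def by simp
qed

definition positive_fn :: "nat \<Rightarrow> fn \<Rightarrow> bool" where
  "positive_fn n f \<longleftrightarrow> (\<forall>x w. (\<forall>i<n. x i > 0) \<longrightarrow> (\<forall>v. w v > 0) \<longrightarrow> f x w > 0)"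

lemma power_int_two_inject: "(2::real) powi m = 2 powi m' \<Longrightarrow> m = m'"
  using power_int_strict_increasing[of m m' "2::real"] power_int_strict_increasing[of m' m "2::real"]
  by (cases m m' rule: linorder_cases) auto

lemma is_deg_unique:
  assumes a: "is_deg n B0 f a" and b: "is_deg n B0 f b" and "positive_fn n f"
  shows "a = b"
proof
  fix i show "a i = b i"
  proof (cases "i < n")
    case True
    define lam :: "nat \<Rightarrow> real" where "lam l = (if l = i then 2 else 1)" for l
    have lam_power: "(\<Prod>l<n. lam l powi c l) = 2 powi c i" for c
    proof -
      have "(\<Prod>l<n. lam l powi c l) = (\<Prod>l<n. if l = i then 2 powi c i else 1)"
        by (rule prod.cong) (auto simp: lam_def)
      then show ?thesis using True by simp
    qed
    have "f (\<lambda>_. 1) (\<lambda>_. 1) > 0"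
      using \<open>positive_fn n f\<close> unfolding positive_fn_def by simp
    moreover have "\<forall>l<n. lam l > 0"
      by (simp add: lam_def)
    ultimately have "(2::real) powi a i = 2 powi b i"
      using is_deg_scale[OF a, of "\<lambda>_. 1" "\<lambda>_. 1" lam] is_deg_scale[OF b, of "\<lambda>_. 1" "\<lambda>_. 1" lam]
      by (simp add: lam_power)
    then show ?thesis by (rule power_int_two_inject)
  qed (simp add: is_deg_support[OF a] is_deg_support[OF b])
qed

section \<open>Degrees under one mutation\<close>

lemma mono_pos: "\<forall>v. w v > 0 \<Longrightarrow> mono n d w e > 0"
  unfolding mono_def by (intro prod_pos) simp

lemma mutX_unchanged: "j \<noteq> k \<Longrightarrow> mutX n d eps k B y X j = X j"
  unfolding mutX_def by simp

lemma mutX_mutated: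
  "mutX n d eps k B y X k = (\<lambda>x w. X k x w powi (-1) * (\<Prod>j<n. X j x w powi pos (- eps * B j k)) ^ d k
      * (\<Sum>s = 0..d k. mono n d w (zvec d k s)
           * (mono n d w (y k) * (\<Prod>j<n. X j x w powi B j k)) powi (eps * int s))
      / mono n d w (tsum d eps k (y k)))"
  unfolding mutX_def by (simp add: Let_def)

lemma positive_fn_mutX:
  assumes X: "\<forall>j<n. positive_fn n (X j)" and "k < n"
  shows "positive_fn n (mutX n d eps k B y X k)"
  unfolding positive_fn_def mutX_mutated
proof (intro allI impI)
  fix x :: "nat \<Rightarrow> real" and w :: "var \<Rightarrow> real"
  assume "\<forall>i<n. 0 < x i" and w: "\<forall>v. 0 < w v"
  then have "X j x w > 0" if "j < n" for j
    using X that unfolding positive_fn_def by blast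
  then show "0 < X k x w powi (-1) * (\<Prod>j<n. X j x w powi pos (- eps * B j k)) ^ d k
      * (\<Sum>s = 0..d k. mono n d w (zvec d k s)
           * (mono n d w (y k) * (\<Prod>j<n. X j x w powi B j k)) powi (eps * int s))
      / mono n d w (tsum d eps k (y k))"
    using \<open>k < n\<close> mono_pos[OF w]
    by (auto intro!: divide_pos_pos mult_pos_pos sum_pos prod_pos zero_less_power zero_less_power_int)
qed

lemma zvec_Y: "zvec d k s (Y j) = 0"
  by (simp add: zvec_def split: if_split)

lemma ydeg_zvec: "ydeg n B0 (zvec d k s) = (\<lambda>_. 0)"
  by (simp add: ydeg_def zvec_Y fun_eq_iff)

lemma is_deg_mutX:
  assumes X: "\<forall>j<n. is_deg n B0 (X j) (G j)" and "k < n"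
    and yhat: "\<forall>i. ydeg n B0 (y k) i + (\<Sum>j<n. B j k * G j i) = 0"
  shows "is_deg n B0 (mutX n d eps k B y X k)
    (\<lambda>i. - G k i + int (d k) * (\<Sum>j<n. pos (- eps * B j k) * G j i) - ydeg n B0 (tsum d eps k (y k)) i)"
proof -
  have Xk: "is_deg n B0 (\<lambda>x w. X k x w powi (-1)) (\<lambda>i. - G k i)"
    using is_deg_power_int[of n B0 "X k" "G k" "-1"] X \<open>k < n\<close> by simp
  have P: "is_deg n B0 (\<lambda>x w. (\<Prod>j<n. X j x w powi pos (- eps * B j k)) ^ d k)
      (\<lambda>i. int (d k) * (\<Sum>j<n. pos (- eps * B j k) * G j i))"
    using X by (intro is_deg_power is_deg_prod is_deg_power_int) auto
  have "is_deg n B0 (\<lambda>x w. mono n d w (y k) * (\<Prod>j<n. X j x w powi B j k))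
      (\<lambda>i. ydeg n B0 (y k) i + (\<Sum>j<n. B j k * G j i))"
    using X by (intro is_deg_mult is_deg_mono is_deg_prod is_deg_power_int) auto
  then have yhat_deg: "is_deg n B0 (\<lambda>x w. mono n d w (y k) * (\<Prod>j<n. X j x w powi B j k)) (\<lambda>_. 0)"
    using yhat by simp
  have "is_deg n B0 (\<lambda>x w. mono n d w (zvec d k s)
           * (mono n d w (y k) * (\<Prod>j<n. X j x w powi B j k)) powi (eps * int s)) (\<lambda>_. 0)" for s
    using is_deg_mult[OF is_deg_mono[of n B0 d "zvec d k s"] is_deg_power_int[OF yhat_deg, of "eps * int s"]]
    by (simp add: ydeg_zvec)
  then have S: "is_deg n B0 (\<lambda>x w. \<Sum>s = 0..d k. mono n d w (zvec d k s)
           * (mono n d w (y k) * (\<Prod>j<n. X j x w powi B j k)) powi (eps * int s)) (\<lambda>_. 0)"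
    by (intro is_deg_sum) auto
  show ?thesis
    using is_deg_divide[OF is_deg_mult[OF is_deg_mult[OF Xk P] S] is_deg_mono]
    unfolding mutX_mutated by simp
qed

lemma skew_symmetrizable_diag: "skew_symmetrizable n B \<Longrightarrow> k < n \<Longrightarrow> B k k = 0"
  unfolding skew_symmetrizable_def by (metis mult_eq_0_iff neg_equal_zero order_less_irrefl)

lemma skew_symmetrizable_mutB:
  assumes "skew_symmetrizable n B" and "k < n"
  shows "skew_symmetrizable n (mutB d k B)"
proof -
  obtain r where r: "\<forall>i<n. r i > 0" and rB: "\<forall>i<n. \<forall>j<n. r i * B i j = - (r j * B j i)"
    using assms(1) unfolding skew_symmetrizable_def by blast
  have r_pos: "r i * pos (- B i k) = r k * pos (B k i)" if "i < n" for i
  proof -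
    have "r i * pos (- B i k) = pos (r i * - B i k)"
      using pos_mult_nonneg[of "r i" "- B i k"] r that by (simp add: less_imp_le)
    also have "\<dots> = pos (r k * B k i)"
      using rB[rule_format, OF that \<open>k < n\<close>] by simp
    also have "\<dots> = r k * pos (B k i)"
      using pos_mult_nonneg[of "r k" "B k i"] r \<open>k < n\<close> by (simp add: less_imp_le)
    finally show ?thesis .
  qed
  have mut: "r i * mutB d k B i j
      = r i * B i j + int (d k) * r k * (pos (B k i) * B k j - B k i * pos (B k j))"
    if "i < n" "i \<noteq> k" "j \<noteq> k" for i j
  proof -
    have "r i * mutB d k B i j
        = r i * B i j + int (d k) * ((r i * pos (- B i k)) * B k j + (r i * B i k) * pos (B k j))"
      using that by (simp add: mutB_def algebra_simps)
    also have "\<dots> = r i * B i j + int (d k) * r k * (pos (B k i) * B k j - B k i * pos (B k j))"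
      unfolding r_pos[OF \<open>i < n\<close>] rB[rule_format, OF \<open>i < n\<close> \<open>k < n\<close>]
      by (simp add: algebra_simps)
    finally show ?thesis .
  qed
  have "r i * mutB d k B i j = - (r j * mutB d k B j i)" if "i < n" "j < n" for i j
  proof (cases "i = k \<or> j = k")
    case True
    then show ?thesis using rB[rule_format, OF that] by (auto simp: mutB_def)
  next
    case False
    then show ?thesis
      using mut[of i j] mut[of j i] rB[rule_format, OF that] that by (simp add: algebra_simps)
  qed
  then show ?thesis
    using r unfolding skew_symmetrizable_def by blast
qed

lemma ydeg_mutY:
  "ydeg n B0 (mutY d eps k B y l) i = (if l = k then - ydeg n B0 (y k) i
     else ydeg n B0 (y l) i + int (d k) * pos (eps * B k l) * ydeg n B0 (y k) i
       - B k l * ydeg n B0 (tsum d eps k (y k)) i)"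
  by (simp add: mutY_def ydeg_def sum_negf sum.distrib sum_subtractf sum_distrib_left
      ring_distribs mult.left_commute)

text \<open>Here a_l and g_j are one coordinate of the degrees of y_l and X_j: if all yhat_l have
degree 0 before the mutation, they do afterwards.\<close>
lemma yhat_degree_zero_mut:
  fixes b :: "nat \<Rightarrow> nat \<Rightarrow> int" and a g :: "nat \<Rightarrow> int" and T :: int
  assumes "k < n" and "l < n" and "b k k = 0"
    and bal: "\<forall>l<n. a l + (\<Sum>j<n. b j l * g j) = 0"
  shows "(if l = k then - a k else a l + int (d k) * pos (b k l) * a k - b k l * T)
    + (\<Sum>j<n. mutB d k b j l * (g(k := - g k + int (d k) * (\<Sum>j<n. pos (- b j k) * g j) - T)) j) = 0"
    (is "_ + (\<Sum>j<n. mutB d k b j l * ?g' j) = 0")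
proof (cases "l = k")
  case True
  have "(\<Sum>j<n. mutB d k b j l * ?g' j) = (\<Sum>j<n. - (b j k * g j))"
    using True \<open>b k k = 0\<close> by (intro sum.cong) (auto simp: mutB_def)
  then show ?thesis
    using True bal[rule_format, OF \<open>k < n\<close>] by (simp add: sum_negf)
next
  case False
  define D S where "D = int (d k)" and "S = (\<Sum>j<n. pos (- b j k) * g j)"
  define F where "F j = mutB d k b j l * ?g' j" for j
  define H where
    "H j = b j l * g j + D * b k l * (pos (- b j k) * g j) + D * pos (b k l) * (b j k * g j)" for j
  have "F j = H j" if "j \<noteq> k" for j
    using that False by (simp add: F_def H_def D_def mutB_def algebra_simps)
  then have "(\<Sum>j\<in>{..<n} - {k}. F j) = (\<Sum>j\<in>{..<n} - {k}. H j)"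
    by simp
  then have "(\<Sum>j<n. F j) = (\<Sum>j<n. H j) - H k + F k"
    using \<open>k < n\<close> by (simp add: sum_diff1)
  moreover have "F k = b k l * g k - D * b k l * S + b k l * T"
    using False by (simp add: F_def mutB_def D_def S_def algebra_simps)
  moreover have "H k = b k l * g k"
    using \<open>b k k = 0\<close> by (simp add: H_def pos_def)
  moreover have "(\<Sum>j<n. H j) = - a l + D * b k l * S - D * pos (b k l) * a k"
  proof -
    have "(\<Sum>j<n. b j l * g j) = - a l" and "(\<Sum>j<n. b j k * g j) = - a k"
      using bal \<open>l < n\<close> \<open>k < n\<close> by (simp_all add: add_eq_0_iff)
    then show ?thesis
      unfolding H_def sum.distrib sum_distrib_left[symmetric] S_def by simp
  qed
  ultimately show ?thesis
    using False by (simp add: F_def D_def)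
qed

section \<open>Graded seeds along a mutation sequence\<close>

text \<open>\<open>G j\<close> is the degree of \<open>X j\<close>; the last clause says that each
yhat_k = y_k \<Prod>_j X_j^b_jk has degree 0.\<close>
definition graded_seed :: "nat \<Rightarrow> (nat \<Rightarrow> nat \<Rightarrow> int) \<Rightarrow> seed \<Rightarrow> (nat \<Rightarrow> nat \<Rightarrow> int) \<Rightarrow> bool" where
  "graded_seed n B0 S G \<longleftrightarrow> (case S of (X, y, B) \<Rightarrow>
     skew_symmetrizable n B \<and>
     (\<forall>j<n. positive_fn n (X j) \<and> is_deg n B0 (X j) (G j)) \<and>
     (\<forall>k<n. \<forall>i. ydeg n B0 (y k) i + (\<Sum>j<n. B j k * G j i) = 0))"

text \<open>The subtracted term is the degree d_k B0 [- c_k]_+ of the tropical denominator of the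
exchange relation.\<close>
definition gvec_mut :: "nat \<Rightarrow> (nat \<Rightarrow> nat) \<Rightarrow> (nat \<Rightarrow> nat \<Rightarrow> int) \<Rightarrow> nat \<Rightarrow> (nat \<Rightarrow> nat \<Rightarrow> int)
    \<Rightarrow> (nat \<Rightarrow> trop) \<Rightarrow> (nat \<Rightarrow> nat \<Rightarrow> int) \<Rightarrow> (nat \<Rightarrow> nat \<Rightarrow> int)" where
  "gvec_mut n d B0 k B y G = G(k := (\<lambda>i.
     - G k i + int (d k) * (\<Sum>j<n. pos (- B j k) * G j i) - ydeg n B0 (tsum d 1 k (y k)) i))"

lemma gvec_mut_apply:
  "gvec_mut n d B0 k B y G j i = (if j = k
     then - G k i + int (d k) * (\<Sum>j<n. pos (- B j k) * G j i) - ydeg n B0 (tsum d 1 k (y k)) i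
     else G j i)"
  by (simp add: gvec_mut_def)

lemma graded_seed_init:
  assumes "skew_symmetrizable n B0"
  shows "graded_seed n B0 (seed0 B0) (\<lambda>j i. if i = j then 1 else 0)"
proof -
  have "ydeg n B0 (yvec k) i + (\<Sum>j<n. B0 j k * (if i = j then 1 else 0)) = 0" if "k < n" for k i
  proof -
    have "(\<Sum>j<n. B0 i j * yvec k (Y j)) = (\<Sum>j<n. if j = k then B0 i j else 0)"
      by (rule sum.cong) (auto simp: yvec_def)
    moreover have "(\<Sum>j<n. B0 j k * (if i = j then 1 else 0)) = (\<Sum>j<n. if i = j then B0 j k else 0)"
      by (rule sum.cong) auto
    ultimately show ?thesis
      using that by (simp add: ydeg_def)
  qed
  then show ?thesis
    using assms unfolding graded_seed_def seed0_def by (auto simp: positive_fn_def is_deg_coordinate)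
qed

lemma graded_seed_mut:
  assumes "graded_seed n B0 (X, y, B) G" and "k < n"
  shows "graded_seed n B0 (mut n d 1 k (X, y, B)) (gvec_mut n d B0 k B y G)"
proof -
  have skew: "skew_symmetrizable n B"
    and X: "\<forall>j<n. positive_fn n (X j) \<and> is_deg n B0 (X j) (G j)"
    and bal: "\<forall>l<n. \<forall>i. ydeg n B0 (y l) i + (\<Sum>j<n. B j l * G j i) = 0"
    using assms(1) unfolding graded_seed_def by auto
  have "positive_fn n (mutX n d 1 k B y X j) \<and> is_deg n B0 (mutX n d 1 k B y X j) (gvec_mut n d B0 k B y G j)"
    if "j < n" for j
  proof (cases "j = k")
    case True
    then show ?thesis
      using positive_fn_mutX is_deg_mutX[of n B0 X G k y B d 1] X bal \<open>k < n\<close> by (simp add: gvec_mut_def)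
  next
    case False
    then show ?thesis
      using X that by (simp add: mutX_unchanged gvec_mut_def)
  qed
  moreover have "ydeg n B0 (mutY d 1 k B y l) i + (\<Sum>j<n. mutB d k B j l * gvec_mut n d B0 k B y G j i) = 0"
    if "l < n" for l i
    using yhat_degree_zero_mut[where b=B and a="\<lambda>l. ydeg n B0 (y l) i" and g="\<lambda>j. G j i" and d=d
        and T="ydeg n B0 (tsum d 1 k (y k)) i", OF \<open>k < n\<close> that skew_symmetrizable_diag[OF skew \<open>k < n\<close>]] bal
    by (simp add: ydeg_mutY gvec_mut_apply cong: if_cong)
  ultimately show ?thesis
    using skew_symmetrizable_mutB[OF skew \<open>k < n\<close>] unfolding graded_seed_def mut_def by simp
qed

lemma pattern_snoc: "pattern n d B0 (ks @ [k]) = mut n d 1 k (pattern n d B0 ks)"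
  by (simp add: pattern_def)

lemma Gmat_eq_gvec:
  assumes "graded_seed n B0 (pattern n d B0 ks) G" and "j < n"
  shows "Gmat n d B0 ks i j = G j i"
proof -
  obtain X y B where S: "pattern n d B0 ks = (X, y, B)"
    by (cases "pattern n d B0 ks") auto
  then have "positive_fn n (X j)" and "is_deg n B0 (X j) (G j)"
    using assms unfolding graded_seed_def by auto
  then have "(THE g. is_deg n B0 (X j) g) = G j"
    by (blast intro: the_equality is_deg_unique)
  then show ?thesis
    using S unfolding Gmat_def Xfun_def by simp
qed

section \<open>Comparison with the ordinary pattern of BD\<close>

text \<open>B' = B D and C' = D^-1 C D, where C_ji = y_i(Y j) is the c-matrix.\<close>
definition rescaled_seed :: "(nat \<Rightarrow> nat) \<Rightarrow> seed \<Rightarrow> seed \<Rightarrow> bool" where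
  "rescaled_seed d S S' \<longleftrightarrow> (case (S, S') of ((_, y, B), (_, y', B')) \<Rightarrow>
     (\<forall>i j. B' i j = B i j * int (d j)) \<and> (\<forall>i j. y' i (Y j) * int (d j) = y i (Y j) * int (d i)))"

lemma tsum_principal: "tsum d 1 k yk (Y j) = int (d k) * min 0 (yk (Y j))"
  unfolding tsum_def using Min_multiples[of "yk (Y j)" "d k"] by (simp add: zvec_Y)

lemma min_0_rescale: "a' * int c = a * int c' \<Longrightarrow> min 0 a' * int c = int c' * min 0 a"
  by (simp add: min_mult_distrib_left min_mult_distrib_right mult.commute)

lemma rescaled_seed_mut:
  assumes "rescaled_seed d (X, y, B) (X', y', B')"
  shows "rescaled_seed d (mut n d 1 k (X, y, B)) (mut n (\<lambda>_. 1) 1 k (X', y', B'))"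
proof -
  have B': "B' i j = B i j * int (d j)" and y': "y' i (Y j) * int (d j) = y i (Y j) * int (d i)" for i j
    using assms unfolding rescaled_seed_def by auto
  have "mutB (\<lambda>_. 1) k B' i j = mutB d k B i j * int (d j)" for i j
    using pos_mult_nonneg[of "int (d k)" "- B i k"] pos_mult_nonneg[of "int (d j)" "B k j"]
    by (simp add: mutB_def B' algebra_simps)
  moreover have "mutY (\<lambda>_. 1) 1 k B' y' i (Y j) * int (d j) = mutY d 1 k B y i (Y j) * int (d i)" for i j
  proof (cases "i = k")
    case False
    have "min 0 (y' k (Y j)) * int (d j) = int (d k) * min 0 (y k (Y j))"
      using y'[of k j] by (rule min_0_rescale)
    moreover have "pos (B k i * int (d i)) = int (d i) * pos (B k i)"
      using pos_mult_nonneg[of "int (d i)" "B k i"] by (simp add: mult.commute)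
    ultimately show ?thesis
      using False y'[of i j] y'[of k j] by (simp add: mutY_def tsum_principal B' algebra_simps)
  qed (simp add: mutY_def y')
  ultimately show ?thesis
    unfolding rescaled_seed_def mut_def by simp
qed

lemma gvec_mut_rescaled:
  assumes "rescaled_seed d (X, y, B) (X', y', B')"
  shows "gvec_mut n d B0 k B y G = gvec_mut n (\<lambda>_. 1) (matD B0 d) k B' y' G"
proof -
  have B': "B' i j = B i j * int (d j)" and y': "y' i (Y j) * int (d j) = y i (Y j) * int (d i)" for i j
    using assms unfolding rescaled_seed_def by auto
  have "int (d k) * (\<Sum>j<n. pos (- B j k) * G j i) = (\<Sum>j<n. pos (- B' j k) * G j i)" for i
    unfolding sum_distrib_left
    using pos_mult_nonneg[of "int (d k)" "- B _ k"] by (intro sum.cong) (simp_all add: B' algebra_simps)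
  moreover have "ydeg n B0 (tsum d 1 k (y k)) i = ydeg n (matD B0 d) (tsum (\<lambda>_. 1) 1 k (y' k)) i" for i
  proof -
    have "min 0 (y' k (Y j)) * int (d j) = int (d k) * min 0 (y k (Y j))" for j
      using y'[of k j] by (rule min_0_rescale)
    then show ?thesis
      by (simp add: ydeg_def tsum_principal matD_def algebra_simps)
  qed
  ultimately show ?thesis
    unfolding gvec_mut_def by (simp add: fun_eq_iff)
qed

lemma skew_symmetrizable_matD:
  assumes "skew_symmetrizable n B" and "\<forall>i<n. d i > 0"
  shows "skew_symmetrizable n (matD B d)"
proof -
  obtain r where r: "\<forall>i<n. r i > 0" and rB: "\<forall>i<n. \<forall>j<n. r i * B i j = - (r j * B j i)"
    using assms(1) unfolding skew_symmetrizable_def by blast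
  have "r i * int (d i) * matD B d i j = - (r j * int (d j) * matD B d j i)" if "i < n" "j < n" for i j
  proof -
    have "r i * int (d i) * matD B d i j = (r i * B i j) * (int (d i) * int (d j))"
      by (simp add: matD_def algebra_simps)
    also have "\<dots> = - (r j * int (d j) * matD B d j i)"
      unfolding rB[rule_format, OF that] by (simp add: matD_def algebra_simps)
    finally show ?thesis .
  qed
  moreover have "r i * int (d i) > 0" if "i < n" for i
    using r assms(2) that by simp
  ultimately show ?thesis
    unfolding skew_symmetrizable_def by (intro exI[of _ "\<lambda>i. r i * int (d i)"]) blast
qed

lemma patterns_have_common_gvectors:
  assumes "skew_symmetrizable n B" and "skew_symmetrizable n (matD B d)" and "set ks \<subseteq> {..<n}"
  shows "\<exists>G. graded_seed n B (pattern n d B ks) G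
    \<and> graded_seed n (matD B d) (pattern n (\<lambda>_. 1) (matD B d) ks) G
    \<and> rescaled_seed d (pattern n d B ks) (pattern n (\<lambda>_. 1) (matD B d) ks)"
  using assms(3)
proof (induction ks rule: rev_induct)
  case Nil
  have "rescaled_seed d (seed0 B) (seed0 (matD B d))"
    by (simp add: rescaled_seed_def seed0_def matD_def yvec_def)
  then show ?case
    using graded_seed_init[OF assms(1)] graded_seed_init[OF assms(2)] by (auto simp: pattern_def)
next
  case (snoc k ks)
  then obtain G where G: "graded_seed n B (pattern n d B ks) G"
    and G': "graded_seed n (matD B d) (pattern n (\<lambda>_. 1) (matD B d) ks) G"
    and R: "rescaled_seed d (pattern n d B ks) (pattern n (\<lambda>_. 1) (matD B d) ks)"
    by auto
  obtain X y Bt where S: "pattern n d B ks = (X, y, Bt)"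
    by (cases "pattern n d B ks") auto
  obtain X' y' Bt' where S': "pattern n (\<lambda>_. 1) (matD B d) ks = (X', y', Bt')"
    by (cases "pattern n (\<lambda>_. 1) (matD B d) ks") auto
  have "k < n"
    using snoc.prems by simp
  show ?case
    unfolding pattern_snoc S S'
  proof (intro exI conjI)
    show "graded_seed n B (mut n d 1 k (X, y, Bt)) (gvec_mut n d B k Bt y G)"
      using graded_seed_mut G S \<open>k < n\<close> by simp
    show "graded_seed n (matD B d) (mut n (\<lambda>_. 1) 1 k (X', y', Bt')) (gvec_mut n d B k Bt y G)"
      using graded_seed_mut G' S' \<open>k < n\<close> gvec_mut_rescaled R S by simp
    show "rescaled_seed d (mut n d 1 k (X, y, Bt)) (mut n (\<lambda>_. 1) 1 k (X', y', Bt'))"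
      using rescaled_seed_mut R S S' by simp
  qed
qed

theorem mainTheorem12:
  fixes n :: nat and B :: "nat \<Rightarrow> nat \<Rightarrow> int" and d :: "nat \<Rightarrow> nat" and t :: "nat list"
  assumes "skew_symmetrizable n B"
    and "\<forall>i<n. d i > 0"
    and "vertex n t"
  shows "\<forall>i<n. \<forall>j<n. Gmat n d B t i j = Gmat n (\<lambda>_. 1) (matD B d) t i j"
proof (intro allI impI)
  fix i j assume "i < n" and "j < n"
  have "set t \<subseteq> {..<n}"
    using assms(3) unfolding vertex_def by simp
  then obtain G where "graded_seed n B (pattern n d B t) G"
    and "graded_seed n (matD B d) (pattern n (\<lambda>_. 1) (matD B d) t) G"
    using patterns_have_common_gvectors[OF assms(1) skew_symmetrizable_matD[OF assms(1,2)]] by blast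
  then show "Gmat n d B t i j = Gmat n (\<lambda>_. 1) (matD B d) t i j"
    using Gmat_eq_gvec \<open>j < n\<close> by metis
qed

end
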